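(* (1) For every $\varphi\in\mathcal{D}(\Omega)$ there exists a family $(\varphi_\varepsilon)_{\varepsilon>0}$ in $L^2_\sharp[Y,H^1(\Omega)]$ such that $\mathcal{F}_\varepsilon(\varphi_\varepsilon)=\varphi$ and $\mathcal{F}_\varepsilon(\nabla_x\varphi_\varepsilon)=\nabla_x\varphi$ for every $\varepsilon>0$; in particular $\varphi_\varepsilon\twoheadrightarrow\varphi$ strongly in $L^2_\sharp[Y,L^2(\Omega)]$ and $\nabla_x\varphi_\varepsilon\twoheadrightarrow\nabla_x\varphi$ strongly in $L^2_\sharp[Y,L^2(\Omega)]^N$. (2) For every $\psi\in\mathcal{D}(\Omega\times Y)$ (extended $Y$-periodically in $y$) there exists a family $(\psi_\varepsilon)_{\varepsilon>0}$ in $L^2_\sharp[Y,H^1(\Omega)]$ such that $\mathcal{F}_\varepsilon(\psi_\varepsilon)=\psi$ and $\varepsilon\mathcal{F}_\varepsilon(\nabla_x\psi_\varepsilon)=\nabla_y\psi+\varepsilon\nabla_x\psi$ for every $\varepsilon>0$; in particular $\psi_\varepsilon\twoheadrightarrow\psi$ strongly in $L^2_\sharp[Y,L^2(\Omega)]$ and $\varepsilon\nabla_x\psi_\varepsilon\twoheadrightarrow\nabla_y\psi$ strongly in $L^2_\sharp[Y,L^2(\Omega)]^N$.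
   Context: Let $N\ge1$, $Y=[0,1]^N$, $\Omega\subseteq\mathbb{R}^N$ open. $L^2_\sharp[Y,L^2(\Omega)]$ is the Hilbert space of measurable functions on $\Omega\times\mathbb{R}^N$, $\mathbb{Z}^N$-periodic in the second variable and square integrable on $\Omega\times Y$; $L^2_\sharp[Y,H^1(\Omega)]$ is the subspace of those $u$ with distributional $\nabla_x u\in L^2_\sharp[Y,L^2(\Omega)]^N$. Functions of $x$ alone are regarded as elements of these spaces constant in $y$. For $\varepsilon>0$, $\mathcal{F}_\varepsilon(u)(x,y):=u(x,y-x/\varepsilon)$. $u_\varepsilon\twoheadrightarrow u_0$ strongly means $\mathcal{F}_\varepsilon(u_\varepsilon)\to u_0$ strongly in $L^2_\sharp[Y,L^2(\Omega)]$ as $\varepsilon\to0$ (componentwise for vectors). *)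

theory Defs
  imports "HOL-Analysis.Analysis"
begin

fun Ck :: "nat \<Rightarrow> ('a::euclidean_space \<Rightarrow> real) \<Rightarrow> bool" where
  "Ck 0 f = continuous_on UNIV f"
| "Ck (Suc k) f = (f differentiable_on UNIV \<and>
      (\<forall>v. Ck k (\<lambda>x. frechet_derivative f (at x) v)))"

definition smooth_fun :: "('a::euclidean_space \<Rightarrow> real) \<Rightarrow> bool" where
  "smooth_fun f \<longleftrightarrow> (\<forall>k. Ck k f)"

definition tsupport :: "('a::euclidean_space \<Rightarrow> real) \<Rightarrow> 'a set" where
  "tsupport f = closure {x. f x \<noteq> 0}"

definition test_fun :: "'a::euclidean_space set \<Rightarrow> ('a \<Rightarrow> real) \<Rightarrow> bool" where
  "test_fun U f \<longleftrightarrow> smooth_fun f \<and> compact (tsupport f) \<and> tsupport f \<subseteq> U"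

definition grad :: "(real^'n \<Rightarrow> real) \<Rightarrow> real^'n \<Rightarrow> real^'n" where
  "grad f x = (\<chi> i. frechet_derivative f (at x) (axis i 1))"

definition grad_x :: "(real^'n \<Rightarrow> real^'n \<Rightarrow> real) \<Rightarrow> real^'n \<Rightarrow> real^'n \<Rightarrow> real^'n" where
  "grad_x u x y = grad (\<lambda>z. u z y) x"

definition grad_y :: "(real^'n \<Rightarrow> real^'n \<Rightarrow> real) \<Rightarrow> real^'n \<Rightarrow> real^'n \<Rightarrow> real^'n" where
  "grad_y u x y = grad (u x) y"

text \<open>Y-periodic extension (in the second variable) of a function given on Omega x Y.\<close>
definition per_ext :: "((real^'n) \<times> (real^'n) \<Rightarrow> real) \<Rightarrow> real^'n \<Rightarrow> real^'n \<Rightarrow> real" where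
  "per_ext g x y = g (x, \<chi> i. frac (y $ i))"

definition unitY :: "(real^'n) set" where
  "unitY = cbox 0 One"

definition periodic_y :: "(real^'n \<Rightarrow> real^'n \<Rightarrow> 'b) \<Rightarrow> bool" where
  "periodic_y u \<longleftrightarrow> (\<forall>x y k. (\<forall>i. k $ i \<in> \<int>) \<longrightarrow> u x (y + k) = u x y)"

definition L2sharp :: "(real^'n) set \<Rightarrow> (real^'n \<Rightarrow> real^'n \<Rightarrow> real) \<Rightarrow> bool" where
  "L2sharp \<Omega> u \<longleftrightarrow> periodic_y u
     \<and> (\<lambda>(x, y). u x y) \<in> borel_measurable (lebesgue_on (\<Omega> \<times> UNIV))
     \<and> integrable (lebesgue_on (\<Omega> \<times> unitY)) (\<lambda>(x, y). (u x y)\<^sup>2)"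

definition L2sharp_vec :: "(real^'n) set \<Rightarrow> (real^'n \<Rightarrow> real^'n \<Rightarrow> real^'n) \<Rightarrow> bool" where
  "L2sharp_vec \<Omega> G \<longleftrightarrow> (\<forall>i. L2sharp \<Omega> (\<lambda>x y. G x y $ i))"

definition has_weak_grad_x ::
  "(real^'n) set \<Rightarrow> (real^'n \<Rightarrow> real^'n \<Rightarrow> real) \<Rightarrow> (real^'n \<Rightarrow> real^'n \<Rightarrow> real^'n) \<Rightarrow> bool" where
  "has_weak_grad_x \<Omega> u G \<longleftrightarrow>
     (\<forall>\<theta>. test_fun (\<Omega> \<times> UNIV) \<theta> \<longrightarrow> (\<forall>i.
        integral\<^sup>L (lebesgue_on (\<Omega> \<times> UNIV))
          (\<lambda>(x, y). u x y * frechet_derivative \<theta> (at (x, y)) (axis i 1, 0))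
        = - integral\<^sup>L (lebesgue_on (\<Omega> \<times> UNIV)) (\<lambda>(x, y). G x y $ i * \<theta> (x, y))))"

definition L2sharp_H1 :: "(real^'n) set \<Rightarrow> (real^'n \<Rightarrow> real^'n \<Rightarrow> real) \<Rightarrow> bool" where
  "L2sharp_H1 \<Omega> u \<longleftrightarrow> L2sharp \<Omega> u \<and> (\<exists>G. L2sharp_vec \<Omega> G \<and> has_weak_grad_x \<Omega> u G)"

definition Feps :: "real \<Rightarrow> (real^'n \<Rightarrow> real^'n \<Rightarrow> 'b) \<Rightarrow> real^'n \<Rightarrow> real^'n \<Rightarrow> 'b" where
  "Feps \<epsilon> u x y = u x (y - (1 / \<epsilon>) *\<^sub>R x)"

definition L2norm :: "(real^'n) set \<Rightarrow> (real^'n \<Rightarrow> real^'n \<Rightarrow> real) \<Rightarrow> real" where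
  "L2norm \<Omega> w = sqrt (integral\<^sup>L (lebesgue_on (\<Omega> \<times> unitY)) (\<lambda>(x, y). (w x y)\<^sup>2))"

definition strong_2s :: "(real^'n) set \<Rightarrow> (real \<Rightarrow> real^'n \<Rightarrow> real^'n \<Rightarrow> real)
    \<Rightarrow> (real^'n \<Rightarrow> real^'n \<Rightarrow> real) \<Rightarrow> bool" where
  "strong_2s \<Omega> ue u0 \<longleftrightarrow>
     ((\<lambda>\<epsilon>. L2norm \<Omega> (\<lambda>x y. Feps \<epsilon> (ue \<epsilon>) x y - u0 x y)) \<longlongrightarrow> 0) (at_right 0)"

definition strong_2s_vec :: "(real^'n) set \<Rightarrow> (real \<Rightarrow> real^'n \<Rightarrow> real^'n \<Rightarrow> real^'n)
    \<Rightarrow> (real^'n \<Rightarrow> real^'n \<Rightarrow> real^'n) \<Rightarrow> bool" where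
  "strong_2s_vec \<Omega> Ge G0 \<longleftrightarrow> (\<forall>i. strong_2s \<Omega> (\<lambda>\<epsilon> x y. Ge \<epsilon> x y $ i) (\<lambda>x y. G0 x y $ i))"

end

theory Submission
  imports Defs
begin

text \<open>
  Both families are obtained by undoing the shift of \<open>Feps\<close>: \<open>\<phi>\<^sub>\<epsilon>(x,y) = \<phi>(x)\<close> does not
  depend on \<open>y\<close>, and \<open>\<psi>\<^sub>\<epsilon>(x,y) = \<psi>(x, y + x/\<epsilon>)\<close>, whose classical \<open>x\<close>-gradient is
  \<open>(\<nabla>\<^sub>x\<psi> + \<epsilon>\<^sup>-\<^sup>1 \<nabla>\<^sub>y\<psi>)(x, y + x/\<epsilon>)\<close> by the chain rule. Hence \<open>Feps\<close> maps the families exactly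
  onto their limits (up to the term \<open>\<epsilon> \<nabla>\<^sub>x\<psi>\<close>, which is \<open>O(\<epsilon>)\<close> in norm), and strong two-scale
  convergence is immediate. Both families are of the form \<open>P(x, y + c x)\<close> with \<open>P\<close> a
  \<open>C\<^sup>1\<close> function, periodic in \<open>y\<close> and compactly supported in \<open>x\<close>; the periodic extension of
  \<open>\<psi>\<close> is \<open>C\<^sup>1\<close> because near any point it is a finite sum of lattice translates of \<open>\<psi>\<close>.
  For such functions the classical gradient is the weak one: integrating by parts against a
  test function reduces to the vanishing of the integral of a directional derivative of a
  compactly supported \<open>C\<^sup>1\<close> function, which follows from translation invariance of Lebesgue
  measure applied to difference quotients and dominated convergence.
\<close>

lemma has_derivative_imp_continuous_on:
  assumes "\<And>z. (f has_derivative f' z) (at z)"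
  shows "continuous_on UNIV f"
  using has_derivative_continuous[OF assms] by (intro continuous_at_imp_continuous_on ballI)

lemma has_derivative_zero_outside_closed:
  fixes g :: "'a::real_normed_vector \<Rightarrow> 'b::real_normed_vector"
  assumes "closed K" "\<And>w. w \<notin> K \<Longrightarrow> g w = 0" "(g has_derivative g') (at z)" "z \<notin> K"
  shows "g' = (\<lambda>_. 0)"
proof -
  have "((\<lambda>_. 0) has_derivative g') (at z)"
    by (rule has_derivative_transform_within_open[OF assms(3), of "- K"]) (use assms in auto)
  then show ?thesis
    by (rule has_derivative_unique[OF _ has_derivative_const])
qed

lemma has_derivative_shift_invariant:
  fixes f :: "'a::real_normed_vector \<Rightarrow> 'b::real_normed_vector"
  assumes f_deriv: "\<And>z. (f has_derivative D z) (at z)" and f_shift: "\<And>z. f (z + a) = f z"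
  shows "D (z + a) = D z"
proof -
  have "((\<lambda>w. f (w + a)) has_derivative D (z + a)) (at z)"
    using has_derivative_compose[OF has_derivative_add_const[OF has_derivative_ident] f_deriv]
    by (simp add: o_def)
  moreover have "(\<lambda>w. f (w + a)) = f"
    using f_shift by simp
  ultimately have "(f has_derivative D (z + a)) (at z)"
    by simp
  then show ?thesis
    using f_deriv[of z] by (rule has_derivative_unique)
qed

lemma has_real_derivative_along_line:
  fixes g :: "'a::real_normed_vector \<Rightarrow> real"
  assumes g_deriv: "\<And>z. (g has_derivative g' z) (at z)"
  shows "((\<lambda>s. g (z + s *\<^sub>R v)) has_real_derivative g' (z + t *\<^sub>R v) v) (at t)"
proof -
  have "((\<lambda>s. z + s *\<^sub>R v) has_derivative (\<lambda>s. s *\<^sub>R v)) (at t)"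
    by (auto intro!: derivative_eq_intros)
  from has_derivative_compose[OF this g_deriv]
  have "((\<lambda>s. g (z + s *\<^sub>R v)) has_derivative (\<lambda>s. g' (z + t *\<^sub>R v) (s *\<^sub>R v))) (at t)"
    by (simp add: o_def)
  moreover have "linear (g' (z + t *\<^sub>R v))"
    using has_derivative_linear[OF g_deriv] .
  then have "(\<lambda>s. g' (z + t *\<^sub>R v) (s *\<^sub>R v)) = (*) (g' (z + t *\<^sub>R v) v)"
    by (auto simp: fun_eq_iff linear_cmul)
  ultimately show ?thesis
    by (simp add: has_field_derivative_def)
qed

lemma C1_if_locally_C1:
  fixes f :: "'a::real_normed_vector \<Rightarrow> 'b::real_normed_vector"
  assumes local: "\<And>z0. \<exists>N g g'. open N \<and> z0 \<in> N \<and> (\<forall>z\<in>N. f z = g z)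
                     \<and> (\<forall>z. (g has_derivative g' z) (at z)) \<and> (\<forall>w. continuous_on UNIV (\<lambda>z. g' z w))"
  shows "(f has_derivative frechet_derivative f (at z)) (at z)"
    and "continuous_on UNIV (\<lambda>z. frechet_derivative f (at z) w)"
proof -
  have at_point: "(f has_derivative frechet_derivative f (at z0)) (at z0)
        \<and> isCont (\<lambda>z. frechet_derivative f (at z) w) z0" for z0
  proof -
    obtain N g g' where N: "open N" "z0 \<in> N" and eq: "\<forall>z\<in>N. f z = g z"
      and g_deriv: "\<forall>z. (g has_derivative g' z) (at z)" and g'_cont: "\<forall>w. continuous_on UNIV (\<lambda>z. g' z w)"
      using local[of z0] by (elim exE conjE)
    have f_deriv: "(f has_derivative g' z) (at z)" if "z \<in> N" for z
      using has_derivative_transform_within_open[OF spec[OF g_deriv] N(1) that] eq by simp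
    then have "frechet_derivative f (at z) = g' z" if "z \<in> N" for z
      using that by (simp add: frechet_derivative_at[symmetric])
    then have "continuous_on N (\<lambda>z. frechet_derivative f (at z) w)"
      using continuous_on_subset[OF spec[OF g'_cont, of w] subset_UNIV] by (simp cong: continuous_on_cong)
    then have "isCont (\<lambda>z. frechet_derivative f (at z) w) z0"
      using continuous_on_eq_continuous_at[OF N(1)] N(2) by blast
    moreover have "(f has_derivative frechet_derivative f (at z0)) (at z0)"
      using f_deriv[OF N(2)] frechet_derivative_at[OF f_deriv[OF N(2)]] by simp
    ultimately show ?thesis
      by blast
  qed
  show "(f has_derivative frechet_derivative f (at z)) (at z)"
    using at_point by blast
  show "continuous_on UNIV (\<lambda>z. frechet_derivative f (at z) w)"
    using at_point by (intro continuous_at_imp_continuous_on ballI) blast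
qed

lemma frechet_derivative_partial_fst:
  assumes "(f has_derivative D) (at (x, y))"
  shows "frechet_derivative (\<lambda>x'. f (x', y)) (at x) = (\<lambda>h. D (h, 0))"
proof -
  have "((\<lambda>x'. (x', y)) has_derivative (\<lambda>h. (h, 0))) (at x)"
    by (auto intro!: derivative_eq_intros)
  from has_derivative_compose[OF this assms]
  have "((\<lambda>x'. f (x', y)) has_derivative (\<lambda>h. D (h, 0))) (at x)"
    by (simp add: o_def)
  then show ?thesis
    by (rule frechet_derivative_at[symmetric])
qed

lemma frechet_derivative_partial_snd:
  assumes "(f has_derivative D) (at (x, y))"
  shows "frechet_derivative (\<lambda>y'. f (x, y')) (at y) = (\<lambda>h. D (0, h))"
proof -
  have "((\<lambda>y'. (x, y')) has_derivative (\<lambda>h. (0, h))) (at y)"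
    by (auto intro!: derivative_eq_intros)
  from has_derivative_compose[OF this assms]
  have "((\<lambda>y'. f (x, y')) has_derivative (\<lambda>h. D (0, h))) (at y)"
    by (simp add: o_def)
  then show ?thesis
    by (rule frechet_derivative_at[symmetric])
qed

lemma not_in_tsupport_zero: "x \<notin> tsupport f \<Longrightarrow> f x = 0"
  using closure_subset[of "{x. f x \<noteq> 0}"] by (auto simp: tsupport_def)

lemma test_fun_C1:
  assumes "test_fun S \<theta>"
  shows "(\<theta> has_derivative frechet_derivative \<theta> (at z)) (at z)"
    and "continuous_on UNIV (\<lambda>z. frechet_derivative \<theta> (at z) v)"
proof -
  have "Ck (Suc 0) \<theta>"
    using assms unfolding test_fun_def smooth_fun_def by blast
  then have "\<theta> differentiable_on UNIV" and "continuous_on UNIV (\<lambda>z. frechet_derivative \<theta> (at z) v)"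
    by simp_all
  then show "(\<theta> has_derivative frechet_derivative \<theta> (at z)) (at z)"
    and "continuous_on UNIV (\<lambda>z. frechet_derivative \<theta> (at z) v)"
    by (simp_all add: differentiable_on_def flip: frechet_derivative_works)
qed

section \<open>Integration by parts against test functions\<close>

lemma integrable_lborel_compact_support:
  fixes f :: "'a::euclidean_space \<Rightarrow> 'b::{banach, second_countable_topology}"
  assumes "continuous_on K f" "compact K" "\<And>z. z \<notin> K \<Longrightarrow> f z = 0"
  shows "integrable lborel f"
proof -
  have "(\<lambda>x. indicator K x *\<^sub>R f x) = f"
    using assms(3) by (auto simp: indicator_def)
  then show ?thesis
    using borel_integrable_compact[OF assms(2,1)] by simp
qed

lemma integrable_lebesgue_on_compact_support:
  fixes f :: "'a::euclidean_space \<Rightarrow> 'b::{banach, second_countable_topology}"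
  assumes "S \<in> sets lebesgue" "continuous_on C f" "compact C"
    and "\<And>z. z \<in> S \<Longrightarrow> z \<notin> C \<Longrightarrow> f z = 0"
  shows "integrable (lebesgue_on S) f"
proof -
  have "integrable lborel (\<lambda>x. indicator C x *\<^sub>R f x)"
    using borel_integrable_compact[OF assms(3,2)] .
  then have "integrable lebesgue (\<lambda>x. indicator C x *\<^sub>R f x)"
    by (simp add: integrable_completion)
  then have "integrable lebesgue (\<lambda>x. indicator S x *\<^sub>R (indicator C x *\<^sub>R f x))"
    by (rule integrable_mult_indicator[OF assms(1)])
  moreover have "(\<lambda>x. indicator S x *\<^sub>R (indicator C x *\<^sub>R f x)) = (\<lambda>x. indicator S x *\<^sub>R f x)"
    using assms(4) by (auto simp: indicator_def fun_eq_iff)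
  ultimately show ?thesis
    using assms(1) by (simp add: integrable_restrict_space)
qed

lemma integral_lebesgue_on_eq_lborel:
  fixes f :: "'a::euclidean_space \<Rightarrow> 'b::{banach, second_countable_topology}"
  assumes "S \<in> sets lebesgue" "f \<in> borel_measurable lborel" "\<And>z. z \<notin> S \<Longrightarrow> f z = 0"
  shows "integral\<^sup>L (lebesgue_on S) f = integral\<^sup>L lborel f"
proof -
  have "(\<lambda>x. indicator S x *\<^sub>R f x) = f"
    using assms(3) by (auto simp: indicator_def)
  then have "integral\<^sup>L (lebesgue_on S) f = integral\<^sup>L lebesgue f"
    using assms(1) by (simp add: integral_restrict_space)
  also have "\<dots> = integral\<^sup>L lborel f"
    using assms(2) by (rule integral_completion)
  finally show ?thesis .
qed

lemma integrable_lborel_translate: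
  fixes f :: "'a::euclidean_space \<Rightarrow> 'b::{banach, second_countable_topology}"
  assumes "integrable lborel f"
  shows "integrable lborel (\<lambda>x. f (x + c))"
proof -
  have "integrable (distr lborel borel ((+) c)) f"
    using assms by (simp add: lborel_distr_plus)
  then show ?thesis
    using assms by (subst (asm) integrable_distr_eq) (auto simp: add.commute)
qed

lemma integral_lborel_translate:
  fixes f :: "'a::euclidean_space \<Rightarrow> 'b::{banach, second_countable_topology}"
  assumes "integrable lborel f"
  shows "integral\<^sup>L lborel (\<lambda>x. f (x + c)) = integral\<^sup>L lborel f"
proof -
  have "integral\<^sup>L lborel f = integral\<^sup>L (distr lborel borel ((+) c)) f"
    by (simp add: lborel_distr_plus)
  also have "\<dots> = integral\<^sup>L lborel (\<lambda>x. f (c + x))"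
    using assms by (intro integral_distr) auto
  finally show ?thesis
    by (simp add: add.commute)
qed

lemma difference_quotient_le_indicator:
  fixes g :: "'a::real_normed_vector \<Rightarrow> real"
  assumes g_zero: "\<And>z. z \<notin> K \<Longrightarrow> g z = 0"
    and g_deriv: "\<And>z. (g has_derivative g' z) (at z)"
    and C: "\<And>w s. w \<in> K \<Longrightarrow> \<bar>s\<bar> \<le> 1 \<Longrightarrow> w + s *\<^sub>R v \<in> C"
    and M: "\<And>w. w \<in> C \<Longrightarrow> \<bar>g' w v\<bar> \<le> M" "0 \<le> M"
    and t: "0 < t" "t \<le> 1"
  shows "\<bar>(g (z + t *\<^sub>R v) - g z) / t\<bar> \<le> M * indicator C z"
proof (cases "z \<in> K \<or> z + t *\<^sub>R v \<in> K")
  case False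
  then show ?thesis
    using g_zero M(2) by simp
next
  case True
  have "\<exists>w a. w \<in> K \<and> z = w + a *\<^sub>R v \<and> -1 \<le> a \<and> a \<le> 0"
  proof (cases "z \<in> K")
    case True
    then show ?thesis
      by (intro exI[of _ z] exI[of _ 0]) auto
  next
    case False
    then have "z + t *\<^sub>R v \<in> K"
      using True by blast
    then show ?thesis
      using t by (intro exI[of _ "z + t *\<^sub>R v"] exI[of _ "- t"]) auto
  qed
  then obtain w a where w: "w \<in> K" "z = w + a *\<^sub>R v" "-1 \<le> a" "a \<le> 0"
    by blast
  have on_C: "z + s *\<^sub>R v \<in> C" if "0 \<le> s" "s \<le> t" for s
    using C[OF w(1), of "a + s"] w t that by (simp add: algebra_simps)
  obtain \<xi> where \<xi>: "0 < \<xi>" "\<xi> < t"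
    and mvt: "g (z + t *\<^sub>R v) - g (z + 0 *\<^sub>R v) = (t - 0) * g' (z + \<xi> *\<^sub>R v) v"
    using MVT2[OF t(1) has_real_derivative_along_line[OF g_deriv]] by blast
  then have "(g (z + t *\<^sub>R v) - g z) / t = g' (z + \<xi> *\<^sub>R v) v"
    using t by simp
  then show ?thesis
    using M(1)[OF on_C] on_C[of 0] \<xi> t by simp
qed

lemma integral_lborel_derivative_eq_0:
  fixes g :: "'a::euclidean_space \<Rightarrow> real"
  assumes K: "compact K" and g_zero: "\<And>z. z \<notin> K \<Longrightarrow> g z = 0"
    and g_deriv: "\<And>z. (g has_derivative g' z) (at z)"
    and g'_cont: "continuous_on UNIV (\<lambda>z. g' z v)"
  shows "integral\<^sup>L lborel (\<lambda>z. g' z v) = 0"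
proof -
  have g_int: "integrable lborel g"
    by (rule integrable_lborel_compact_support[OF
          continuous_on_subset[OF has_derivative_imp_continuous_on[OF g_deriv] subset_UNIV] K g_zero])
  define C where "C = (\<lambda>(w, s). w + s *\<^sub>R v) ` (K \<times> {-1..1::real})"
  have "compact C"
    unfolding C_def case_prod_unfold
    by (intro compact_continuous_image continuous_intros compact_Times K compact_Icc)
  then have "bounded ((\<lambda>w. g' w v) ` C)"
    by (intro compact_imp_bounded compact_continuous_image continuous_on_subset[OF g'_cont subset_UNIV])
  then obtain M where M: "\<And>w. w \<in> C \<Longrightarrow> \<bar>g' w v\<bar> \<le> M" "0 \<le> M"
    unfolding bounded_pos by fastforce
  have on_C: "w + s *\<^sub>R v \<in> C" if "w \<in> K" "\<bar>s\<bar> \<le> 1" for w s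
    unfolding C_def using that by (auto intro!: image_eqI[where x="(w, s)"])
  define t where "t n = 1 / real (Suc n)" for n
  have t: "0 < t n" "t n \<le> 1" for n
    unfolding t_def by (auto simp: field_simps)
  have t_lim: "filterlim t (at 0) sequentially"
  proof (rule tendsto_imp_filterlim_at_right[THEN filterlim_mono])
    show "(t \<longlongrightarrow> 0) sequentially"
      unfolding t_def using LIMSEQ_Suc[OF lim_const_over_n[of 1]] by (simp add: of_nat_Suc)
  qed (auto simp: at_le t)
  define q where "q n z = (g (z + t n *\<^sub>R v) - g z) / t n" for n z
  have q_int: "integrable lborel (q n)" for n
    unfolding q_def using integrable_lborel_translate[OF g_int] g_int by auto
  have q_integral: "integral\<^sup>L lborel (q n) = 0" for n
    unfolding q_def
    using integrable_lborel_translate[OF g_int] integral_lborel_translate[OF g_int] g_int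
    by simp
  have q_lim: "(\<lambda>n. q n z) \<longlonglongrightarrow> g' z v" for z
  proof -
    have "((\<lambda>s. (g (z + s *\<^sub>R v) - g z) / s) \<longlongrightarrow> g' z v) (at 0)"
      using has_real_derivative_along_line[OF g_deriv, of z v 0] by (simp add: DERIV_def)
    from filterlim_compose[OF this t_lim] show ?thesis
      by (simp add: q_def o_def)
  qed
  have q_bound: "norm (q n z) \<le> M * indicator C z" for n z
    using difference_quotient_le_indicator[OF g_zero g_deriv on_C M t] by (simp add: q_def)
  have "(\<lambda>n. integral\<^sup>L lborel (q n)) \<longlonglongrightarrow> integral\<^sup>L lborel (\<lambda>z. g' z v)"
  proof (rule integral_dominated_convergence[where w="\<lambda>z. M * indicator C z"])
    show "(\<lambda>z. g' z v) \<in> borel_measurable lborel"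
      using borel_measurable_continuous_onI[OF g'_cont] by simp
    show "q n \<in> borel_measurable lborel" for n
      using q_int by auto
    show "integrable lborel (\<lambda>z. M * indicator C z)"
      using borel_integrable_compact[OF \<open>compact C\<close>, of "\<lambda>_. M"] by (simp add: mult.commute)
    show "AE z in lborel. (\<lambda>n. q n z) \<longlonglongrightarrow> g' z v"
      using q_lim by simp
    show "AE z in lborel. norm (q n z) \<le> M * indicator C z" for n
      using q_bound by simp
  qed
  then show ?thesis
    using q_integral LIMSEQ_unique by (simp add: LIMSEQ_const_iff)
qed

lemma integration_by_parts_test_fun:
  fixes u \<theta> :: "'a::euclidean_space \<Rightarrow> real"
  assumes S: "S \<in> sets lebesgue" and \<theta>: "test_fun S \<theta>"
    and u_deriv: "\<And>z. (u has_derivative u' z) (at z)"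
    and u'_cont: "continuous_on UNIV (\<lambda>z. u' z v)"
  shows "integral\<^sup>L (lebesgue_on S) (\<lambda>z. u z * frechet_derivative \<theta> (at z) v)
       = - integral\<^sup>L (lebesgue_on S) (\<lambda>z. u' z v * \<theta> z)"
proof -
  define K where "K = tsupport \<theta>"
  have K: "compact K" "K \<subseteq> S"
    using \<theta> by (auto simp: test_fun_def K_def)
  note \<theta>_deriv = test_fun_C1(1)[OF \<theta>]
  have \<theta>_zero: "\<theta> z = 0" if "z \<notin> K" for z
    using that unfolding K_def by (rule not_in_tsupport_zero)
  have \<theta>'_zero: "frechet_derivative \<theta> (at z) v = 0" if "z \<notin> K" for z
    using has_derivative_zero_outside_closed[OF compact_imp_closed[OF K(1)] \<theta>_zero \<theta>_deriv that]
    by simp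
  have outside: "z \<notin> K" if "z \<notin> S" for z
    using K(2) that by blast
  define f1 where "f1 z = u z * frechet_derivative \<theta> (at z) v" for z
  define f2 where "f2 z = u' z v * \<theta> z" for z
  have f1_cont: "continuous_on UNIV f1"
    unfolding f1_def
    using has_derivative_imp_continuous_on[OF u_deriv] test_fun_C1(2)[OF \<theta>]
    by (rule continuous_on_mult)
  have f2_cont: "continuous_on UNIV f2"
    unfolding f2_def
    using u'_cont has_derivative_imp_continuous_on[OF \<theta>_deriv] by (rule continuous_on_mult)
  have f1_int: "integrable lborel f1"
    by (rule integrable_lborel_compact_support[OF continuous_on_subset[OF f1_cont subset_UNIV] K(1)])
       (simp add: f1_def \<theta>'_zero)
  have f2_int: "integrable lborel f2"
    by (rule integrable_lborel_compact_support[OF continuous_on_subset[OF f2_cont subset_UNIV] K(1)])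
       (simp add: f2_def \<theta>_zero)
  have product_deriv: "((\<lambda>z. u z * \<theta> z) has_derivative
      (\<lambda>h. u z * frechet_derivative \<theta> (at z) h + u' z h * \<theta> z)) (at z)" for z
    by (rule has_derivative_mult[OF u_deriv \<theta>_deriv])
  have "integral\<^sup>L lborel (\<lambda>z. f1 z + f2 z) = 0"
    unfolding f1_def f2_def
    using continuous_on_add[OF f1_cont f2_cont] \<theta>_zero
    by (intro integral_lborel_derivative_eq_0[OF K(1) _ product_deriv, where v=v])
       (auto simp: f1_def f2_def)
  then have "integral\<^sup>L lborel f1 = - integral\<^sup>L lborel f2"
    using Bochner_Integration.integral_add[OF f1_int f2_int] by simp
  moreover have "integral\<^sup>L (lebesgue_on S) f1 = integral\<^sup>L lborel f1"
    using borel_measurable_continuous_onI[OF f1_cont]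
    by (intro integral_lebesgue_on_eq_lborel[OF S]) (simp_all add: f1_def \<theta>'_zero outside)
  moreover have "integral\<^sup>L (lebesgue_on S) f2 = integral\<^sup>L lborel f2"
    using borel_measurable_continuous_onI[OF f2_cont]
    by (intro integral_lebesgue_on_eq_lborel[OF S]) (simp_all add: f2_def \<theta>_zero outside)
  ultimately show ?thesis
    by (simp add: f1_def[abs_def] f2_def[abs_def])
qed

section \<open>The periodic extension of a test function\<close>

definition floor_vec :: "real^'n \<Rightarrow> real^'n" where
  "floor_vec y = (\<chi> i. of_int \<lfloor>y $ i\<rfloor>)"

lemma per_ext_eq_floor_vec: "per_ext g x y = g (x, y - floor_vec y)"
proof -
  have "(\<chi> i. frac (y $ i)) = y - floor_vec y"
    by (simp add: vec_eq_iff floor_vec_def frac_def)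
  then show ?thesis
    by (simp add: per_ext_def)
qed

lemma periodic_y_per_ext: "periodic_y (per_ext g)"
  unfolding periodic_y_def per_ext_def by (simp add: frac_add_int_right)

lemma floor_vec_unique:
  fixes k y :: "real^'n"
  assumes "\<forall>i. k $ i \<in> \<int>" "y - k \<in> box 0 One"
  shows "k = floor_vec y"
proof -
  have One: "(One :: real^'n) $ i = 1" for i
    by (simp add: cart_eq_inner_axis inner_sum_Basis)
  have "k $ i = of_int \<lfloor>y $ i\<rfloor>" for i
  proof -
    obtain m where m: "k $ i = of_int m"
      using assms(1) Ints_cases by blast
    have "\<forall>i. (0 :: real^'n) $ i < (y - k) $ i \<and> (y - k) $ i < (One :: real^'n) $ i"
      using assms(2) mem_box_cart(1) by blast
    then have "0 < y $ i - k $ i" "y $ i - k $ i < 1"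
      by (simp_all only: One zero_index vector_minus_component)
    then have "\<lfloor>y $ i\<rfloor> = m"
      using m by (intro floor_unique) auto
    then show ?thesis
      using m by simp
  qed
  then show ?thesis
    by (simp add: vec_eq_iff floor_vec_def)
qed

text \<open>The integer vectors within one unit of \<open>floor_vec y0\<close> in every coordinate; they contain
  \<open>floor_vec y\<close> for every \<open>y\<close> near \<open>y0\<close>.\<close>
definition lattice_nbhd :: "real^'n \<Rightarrow> (real^'n) set" where
  "lattice_nbhd y0 = (\<lambda>d. floor_vec y0 + (\<chi> i. of_int (d i))) ` (PiE UNIV (\<lambda>_. {-1, 0, 1}))"

lemma finite_lattice_nbhd: "finite (lattice_nbhd y0)"
  unfolding lattice_nbhd_def by (intro finite_imageI finite_PiE) auto

lemma lattice_nbhd_Ints: "k \<in> lattice_nbhd y0 \<Longrightarrow> \<forall>i. k $ i \<in> \<int>"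
  by (auto simp: lattice_nbhd_def floor_vec_def)

lemma floor_diff_in_unit_range:
  fixes a b :: real
  assumes "\<bar>a - b\<bar> < 1"
  shows "\<lfloor>a\<rfloor> - \<lfloor>b\<rfloor> \<in> {-1, 0, 1}"
proof -
  have "\<lfloor>a\<rfloor> \<le> \<lfloor>b + 1\<rfloor>" "\<lfloor>b\<rfloor> \<le> \<lfloor>a + 1\<rfloor>"
    using assms by (intro floor_mono; simp add: abs_less_iff)+
  then show ?thesis
    by auto
qed

lemma floor_vec_in_lattice_nbhd:
  assumes "dist y y0 < 1"
  shows "floor_vec y \<in> lattice_nbhd y0"
proof -
  define d where "d i = \<lfloor>y $ i\<rfloor> - \<lfloor>y0 $ i\<rfloor>" for i
  have "\<bar>y $ i - y0 $ i\<bar> < 1" for i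
    using assms component_le_norm_cart[of "y - y0" i] by (simp add: dist_norm)
  then have "d i \<in> {-1, 0, 1}" for i
    unfolding d_def by (rule floor_diff_in_unit_range)
  then have "d \<in> PiE UNIV (\<lambda>_. {-1, 0, 1})"
    by (simp add: PiE_iff)
  moreover have "floor_vec y = floor_vec y0 + (\<chi> i. of_int (d i))"
    by (simp add: vec_eq_iff floor_vec_def d_def)
  ultimately show ?thesis
    unfolding lattice_nbhd_def by blast
qed

lemma per_ext_eq_sum_translates:
  assumes supp: "tsupport g \<subseteq> UNIV \<times> box 0 One" and y: "dist y y0 < 1"
  shows "per_ext g x y = (\<Sum>k\<in>lattice_nbhd y0. g ((x, y) - (0, k)))"
proof -
  have "g (x, y - k) = (if k = floor_vec y then g (x, y - floor_vec y) else 0)"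
    if "k \<in> lattice_nbhd y0" for k
  proof (cases "g (x, y - k) = 0")
    case False
    then have "y - k \<in> box 0 One"
      using supp not_in_tsupport_zero by blast
    then show ?thesis
      using floor_vec_unique lattice_nbhd_Ints[OF that] by auto
  qed auto
  then have "(\<Sum>k\<in>lattice_nbhd y0. g ((x, y) - (0, k)))
           = (\<Sum>k\<in>lattice_nbhd y0. if k = floor_vec y then g (x, y - floor_vec y) else 0)"
    by (intro sum.cong) auto
  also have "\<dots> = g (x, y - floor_vec y)"
    using floor_vec_in_lattice_nbhd[OF y] by (simp add: sum.delta[OF finite_lattice_nbhd])
  also have "\<dots> = per_ext g x y"
    by (simp add: per_ext_eq_floor_vec)
  finally show ?thesis ..
qed

lemma per_ext_C1:
  fixes g :: "(real^'n) \<times> (real^'n) \<Rightarrow> real"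
  assumes g: "test_fun (\<Omega> \<times> box 0 One) g"
  shows "(case_prod (per_ext g) has_derivative frechet_derivative (case_prod (per_ext g)) (at z)) (at z)"
    and "continuous_on UNIV (\<lambda>z. frechet_derivative (case_prod (per_ext g)) (at z) w)"
proof -
  have supp: "tsupport g \<subseteq> UNIV \<times> box 0 One"
    using g by (auto simp: test_fun_def)
  have local: "\<exists>N h h'. open N \<and> z0 \<in> N \<and> (\<forall>z\<in>N. case_prod (per_ext g) z = h z)
          \<and> (\<forall>z. (h has_derivative h' z) (at z)) \<and> (\<forall>w. continuous_on UNIV (\<lambda>z. h' z w))"
    for z0 :: "(real^'n) \<times> (real^'n)"
  proof (intro exI conjI allI ballI)
    let ?F = "lattice_nbhd (snd z0)"
    show "open (UNIV \<times> ball (snd z0) 1)" "z0 \<in> UNIV \<times> ball (snd z0) 1"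
      by (auto intro: open_Times simp: mem_Times_iff)
    show "case_prod (per_ext g) z = (\<Sum>k\<in>?F. g (z - (0, k)))" if "z \<in> UNIV \<times> ball (snd z0) 1" for z
      using per_ext_eq_sum_translates[OF supp, of "snd z" "snd z0" "fst z"] that
      by (auto simp: case_prod_unfold dist_commute mem_Times_iff)
    show "((\<lambda>z. \<Sum>k\<in>?F. g (z - (0, k))) has_derivative
           (\<lambda>h. \<Sum>k\<in>?F. frechet_derivative g (at (z - (0, k))) h)) (at z)" for z
      using has_derivative_compose[OF has_derivative_diff[OF has_derivative_ident has_derivative_const]
          test_fun_C1(1)[OF g]]
      by (auto simp: o_def intro!: has_derivative_sum)
    show "continuous_on UNIV (\<lambda>z. \<Sum>k\<in>?F. frechet_derivative g (at (z - (0, k))) w)" for w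
      by (intro continuous_on_sum continuous_on_compose2[OF test_fun_C1(2)[OF g]] continuous_intros)
         auto
  qed
  show "(case_prod (per_ext g) has_derivative frechet_derivative (case_prod (per_ext g)) (at z)) (at z)"
    by (rule C1_if_locally_C1(1)[OF local])
  show "continuous_on UNIV (\<lambda>z. frechet_derivative (case_prod (per_ext g)) (at z) w)"
    by (rule C1_if_locally_C1(2)[OF local])
qed

section \<open>Sheared periodic functions in \<open>L2_sharp[Y, H1(\<Omega>)]\<close>\<close>

lemma sets_lebesgue_open_Times:
  fixes \<Omega> :: "(real^'n) set"
  assumes "open \<Omega>"
  shows "\<Omega> \<times> (UNIV :: (real^'n) set) \<in> sets lebesgue" "\<Omega> \<times> (unitY :: (real^'n) set) \<in> sets lebesgue"
proof -
  have "\<Omega> \<times> (UNIV :: (real^'n) set) \<in> sets borel"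
    using assms by (intro borel_open open_Times) auto
  moreover have "UNIV \<times> (unitY :: (real^'n) set) \<in> sets borel"
    unfolding unitY_def by (intro borel_closed closed_Times) auto
  moreover have "\<Omega> \<times> (unitY :: (real^'n) set) = (\<Omega> \<times> UNIV) \<inter> (UNIV \<times> unitY)"
    by auto
  ultimately have "\<Omega> \<times> (unitY :: (real^'n) set) \<in> sets borel"
    by (metis sets.Int)
  with \<open>\<Omega> \<times> UNIV \<in> sets borel\<close> show "\<Omega> \<times> (UNIV :: (real^'n) set) \<in> sets lebesgue" "\<Omega> \<times> (unitY :: (real^'n) set) \<in> sets lebesgue"
    by (auto intro: sets_completionI_sets)
qed

lemma L2sharp_if_continuous_compact_support:
  fixes u :: "real^'n \<Rightarrow> real^'n \<Rightarrow> real"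
  assumes "open \<Omega>" "periodic_y u" "continuous_on UNIV (\<lambda>(x, y). u x y)"
    and "compact K" "\<And>x y. x \<notin> K \<Longrightarrow> u x y = 0"
  shows "L2sharp \<Omega> u"
  unfolding L2sharp_def
proof (intro conjI)
  show "(\<lambda>(x, y). u x y) \<in> borel_measurable (lebesgue_on (\<Omega> \<times> UNIV))"
    using sets_lebesgue_open_Times(1)[OF assms(1)] assms(3)
    by (auto intro: continuous_imp_measurable_on_sets_lebesgue continuous_on_subset)
  have compact: "compact (K \<times> (unitY :: (real^'n) set))"
    using assms(4) by (simp add: compact_Times unitY_def)
  have cont: "continuous_on (K \<times> unitY) (\<lambda>(x, y). (u x y)\<^sup>2)"
    using assms(3) by (auto simp: case_prod_unfold intro: continuous_on_subset continuous_on_power)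
  have vanish: "(\<lambda>(x, y). (u x y)\<^sup>2) z = 0" if "z \<in> \<Omega> \<times> unitY" "z \<notin> K \<times> unitY" for z
    using that assms(5) by (auto simp: case_prod_unfold mem_Times_iff)
  show "integrable (lebesgue_on (\<Omega> \<times> unitY)) (\<lambda>(x, y). (u x y)\<^sup>2)"
    by (rule integrable_lebesgue_on_compact_support[OF sets_lebesgue_open_Times(2)[OF assms(1)]
          cont compact vanish])
qed (rule assms(2))

lemma has_weak_grad_x_if_has_derivative:
  fixes u :: "real^'n \<Rightarrow> real^'n \<Rightarrow> real"
  assumes "open \<Omega>" "\<And>z. ((\<lambda>(x, y). u x y) has_derivative U' z) (at z)"
    and "\<And>i. continuous_on UNIV (\<lambda>z. U' z (axis i 1, 0))"
    and "\<And>x y i. G x y $ i = U' (x, y) (axis i 1, 0)"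
  shows "has_weak_grad_x \<Omega> u G"
  unfolding has_weak_grad_x_def
proof (intro allI impI)
  fix \<theta> :: "(real^'n) \<times> (real^'n) \<Rightarrow> real" and i :: 'n
  assume "test_fun (\<Omega> \<times> UNIV) \<theta>"
  from integration_by_parts_test_fun[OF sets_lebesgue_open_Times(1)[OF assms(1)] this assms(2) assms(3)[of i]]
  show "integral\<^sup>L (lebesgue_on (\<Omega> \<times> UNIV)) (\<lambda>(x, y). u x y * frechet_derivative \<theta> (at (x, y)) (axis i 1, 0))
      = - integral\<^sup>L (lebesgue_on (\<Omega> \<times> UNIV)) (\<lambda>(x, y). G x y $ i * \<theta> (x, y))"
    by (simp add: case_prod_unfold assms(4))
qed

lemma sheared_periodic_L2sharp_H1:
  fixes P :: "real^'n \<Rightarrow> real^'n \<Rightarrow> real" and c :: real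
  assumes \<Omega>: "open \<Omega>"
    and P_deriv: "\<And>z. (case_prod P has_derivative D z) (at z)"
    and D_cont: "\<And>w. continuous_on UNIV (\<lambda>z. D z w)"
    and P_periodic: "periodic_y P"
    and K: "compact K" and P_zero: "\<And>x y. x \<notin> K \<Longrightarrow> P x y = 0"
  defines "u \<equiv> \<lambda>x y. P x (y + c *\<^sub>R x)"
    and "G \<equiv> \<lambda>x y. \<chi> i. D (x, y + c *\<^sub>R x) (axis i 1, c *\<^sub>R axis i 1)"
  shows "L2sharp \<Omega> u \<and> L2sharp_vec \<Omega> G \<and> has_weak_grad_x \<Omega> u G"
proof -
  define T where "T z = (fst z, snd z + c *\<^sub>R fst z)" for z :: "(real^'n) \<times> (real^'n)"
  have T_deriv: "(T has_derivative T) (at z)" for z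
    unfolding T_def by (auto intro!: derivative_eq_intros)
  have u_T: "(\<lambda>(x, y). u x y) = case_prod P \<circ> T"
    by (auto simp: u_def T_def)
  have u_deriv: "((\<lambda>(x, y). u x y) has_derivative (\<lambda>h. D (T z) (T h))) (at z)" for z
    unfolding u_T using has_derivative_compose[OF T_deriv P_deriv] by (simp add: o_def)
  have DT_cont: "continuous_on UNIV (\<lambda>z. D (T z) w)" for w
    unfolding T_def by (intro continuous_on_compose2[OF D_cont] continuous_intros) auto
  have G_eq: "G x y $ i = D (T (x, y)) (T (axis i 1, 0))" for x y i
    by (simp add: G_def T_def)
  have D_periodic: "D (z + (0, k)) = D z" if "\<forall>i. k $ i \<in> \<int>" for z k
    using P_periodic that
    by (intro has_derivative_shift_invariant[OF P_deriv]) (auto simp: periodic_y_def case_prod_unfold)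
  have D_zero: "D (x, y) = (\<lambda>_. 0)" if "x \<notin> K" for x y
    using K P_zero that
    by (intro has_derivative_zero_outside_closed[OF _ _ P_deriv, of "K \<times> UNIV"])
       (auto simp: compact_imp_closed closed_Times)
  have T_shift: "T (x, y + k) = T (x, y) + (0, k)" for x y k
    by (simp add: T_def algebra_simps)
  have "L2sharp \<Omega> u"
  proof (rule L2sharp_if_continuous_compact_support[OF \<Omega> _ _ K])
    show "periodic_y u"
      unfolding periodic_y_def u_def
    proof (intro allI impI)
      fix x y k :: "real^'n"
      assume "\<forall>i. k $ i \<in> \<int>"
      then have "P x ((y + c *\<^sub>R x) + k) = P x (y + c *\<^sub>R x)"
        using P_periodic by (simp add: periodic_y_def)
      then show "P x (y + k + c *\<^sub>R x) = P x (y + c *\<^sub>R x)"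
        by (simp add: algebra_simps)
    qed
    show "continuous_on UNIV (\<lambda>(x, y). u x y)"
      using has_derivative_imp_continuous_on[OF u_deriv] .
  qed (simp add: u_def P_zero)
  moreover have "L2sharp_vec \<Omega> G"
    unfolding L2sharp_vec_def
  proof
    fix i
    show "L2sharp \<Omega> (\<lambda>x y. G x y $ i)"
    proof (rule L2sharp_if_continuous_compact_support[OF \<Omega> _ _ K])
      show "periodic_y (\<lambda>x y. G x y $ i)"
        by (simp add: periodic_y_def G_eq T_shift D_periodic)
      show "continuous_on UNIV (\<lambda>(x, y). G x y $ i)"
        using DT_cont by (simp add: G_eq case_prod_unfold)
    qed (simp add: G_eq T_def D_zero)
  qed
  moreover have "has_weak_grad_x \<Omega> u G"
    by (rule has_weak_grad_x_if_has_derivative[OF \<Omega> u_deriv DT_cont G_eq])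
  ultimately show ?thesis
    by blast
qed

lemma strong_2s_if_Feps_diff_scaled:
  assumes "\<And>\<epsilon> x y. \<epsilon> > 0 \<Longrightarrow> x \<in> \<Omega> \<Longrightarrow> Feps \<epsilon> (ue \<epsilon>) x y - u0 x y = \<epsilon> * g x y"
  shows "strong_2s \<Omega> ue u0"
  unfolding strong_2s_def
proof -
  define A where "A = integral\<^sup>L (lebesgue_on (\<Omega> \<times> unitY)) (\<lambda>(x, y). (g x y)\<^sup>2)"
  have "\<forall>\<^sub>F \<epsilon> in at_right 0. \<epsilon> > (0 :: real)"
    by (simp add: eventually_at_filter)
  then have "\<forall>\<^sub>F \<epsilon> in at_right 0. sqrt (\<epsilon>\<^sup>2 * A) = L2norm \<Omega> (\<lambda>x y. Feps \<epsilon> (ue \<epsilon>) x y - u0 x y)"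
  proof eventually_elim
    case (elim \<epsilon>)
    then have "integral\<^sup>L (lebesgue_on (\<Omega> \<times> unitY)) (\<lambda>(x, y). (Feps \<epsilon> (ue \<epsilon>) x y - u0 x y)\<^sup>2)
             = integral\<^sup>L (lebesgue_on (\<Omega> \<times> unitY)) (\<lambda>z. \<epsilon>\<^sup>2 * (case z of (x, y) \<Rightarrow> (g x y)\<^sup>2))"
      by (intro Bochner_Integration.integral_cong)
         (auto simp: space_restrict_space assms power_mult_distrib)
    then show "sqrt (\<epsilon>\<^sup>2 * A) = L2norm \<Omega> (\<lambda>x y. Feps \<epsilon> (ue \<epsilon>) x y - u0 x y)"
      by (simp add: L2norm_def A_def)
  qed
  moreover have "((\<lambda>\<epsilon>. sqrt (\<epsilon>\<^sup>2 * A)) \<longlongrightarrow> sqrt (0\<^sup>2 * A)) (at_right 0)"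
    by (intro tendsto_intros)
  ultimately show "((\<lambda>\<epsilon>. L2norm \<Omega> (\<lambda>x y. Feps \<epsilon> (ue \<epsilon>) x y - u0 x y)) \<longlongrightarrow> 0) (at_right 0)"
    using Lim_transform_eventually by fastforce
qed

lemma strong_2s_if_Feps_eq:
  assumes "\<And>\<epsilon> x y. \<epsilon> > 0 \<Longrightarrow> x \<in> \<Omega> \<Longrightarrow> Feps \<epsilon> (ue \<epsilon>) x y = u0 x y"
  shows "strong_2s \<Omega> ue u0"
  by (rule strong_2s_if_Feps_diff_scaled[where g="\<lambda>x y. 0"]) (simp add: assms)

lemma test_fun_two_scale_family:
  fixes \<phi> :: "real^'n \<Rightarrow> real"
  assumes \<Omega>: "open \<Omega>" and \<phi>: "test_fun \<Omega> \<phi>"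
  shows "\<exists>\<phi>e Ge.
           (\<forall>\<epsilon>>0. L2sharp_H1 \<Omega> (\<phi>e \<epsilon>) \<and> L2sharp_vec \<Omega> (Ge \<epsilon>)
              \<and> has_weak_grad_x \<Omega> (\<phi>e \<epsilon>) (Ge \<epsilon>)
              \<and> (\<forall>x\<in>\<Omega>. \<forall>y. Feps \<epsilon> (\<phi>e \<epsilon>) x y = \<phi> x)
              \<and> (\<forall>x\<in>\<Omega>. \<forall>y. Feps \<epsilon> (Ge \<epsilon>) x y = grad \<phi> x))
         \<and> strong_2s \<Omega> \<phi>e (\<lambda>x y. \<phi> x)
         \<and> strong_2s_vec \<Omega> Ge (\<lambda>x y. grad \<phi> x)"
proof -
  define \<phi>e where "\<phi>e \<epsilon> x y = \<phi> x" for \<epsilon> :: real and x y :: "real^'n"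
  define Ge where "Ge \<epsilon> x y = grad \<phi> x" for \<epsilon> :: real and x y :: "real^'n"
  have deriv: "((\<lambda>(x, y). \<phi> x) has_derivative (\<lambda>h. frechet_derivative \<phi> (at (fst z)) (fst h))) (at z)"
    for z :: "(real^'n) \<times> (real^'n)"
    using has_derivative_compose[OF has_derivative_fst[OF has_derivative_ident] test_fun_C1(1)[OF \<phi>]]
    by (simp add: case_prod_unfold o_def)
  have cont: "continuous_on UNIV (\<lambda>z. frechet_derivative \<phi> (at (fst z)) (fst w))"
    for w :: "(real^'n) \<times> (real^'n)"
    by (intro continuous_on_compose2[OF test_fun_C1(2)[OF \<phi>]] continuous_intros) auto
  have periodic: "periodic_y (\<lambda>x y :: real^'n. \<phi> x)"
    by (simp add: periodic_y_def)
  have "compact (tsupport \<phi>)"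
    using \<phi> by (simp add: test_fun_def)
  from sheared_periodic_L2sharp_H1[where P="\<lambda>x y. \<phi> x" and c=0 and K="tsupport \<phi>"
      and D="\<lambda>z h. frechet_derivative \<phi> (at (fst z)) (fst h)", OF \<Omega> deriv cont periodic this
      not_in_tsupport_zero[of _ \<phi>]]
  have "L2sharp \<Omega> (\<phi>e \<epsilon>) \<and> L2sharp_vec \<Omega> (Ge \<epsilon>) \<and> has_weak_grad_x \<Omega> (\<phi>e \<epsilon>) (Ge \<epsilon>)" for \<epsilon>
    by (simp add: \<phi>e_def[abs_def] Ge_def[abs_def] grad_def)
  then show ?thesis
    unfolding strong_2s_vec_def
    by (intro exI[of _ \<phi>e] exI[of _ Ge])
       (auto simp: L2sharp_H1_def Feps_def \<phi>e_def Ge_def intro!: strong_2s_if_Feps_eq)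
qed

lemma periodic_test_fun_two_scale_family:
  fixes \<psi>0 :: "(real^'n) \<times> (real^'n) \<Rightarrow> real"
  assumes \<Omega>: "open \<Omega>" and \<psi>0: "test_fun (\<Omega> \<times> box 0 One) \<psi>0"
  shows "\<exists>\<psi>e Ge.
           (\<forall>\<epsilon>>0. L2sharp_H1 \<Omega> (\<psi>e \<epsilon>) \<and> L2sharp_vec \<Omega> (Ge \<epsilon>)
              \<and> has_weak_grad_x \<Omega> (\<psi>e \<epsilon>) (Ge \<epsilon>)
              \<and> (\<forall>x\<in>\<Omega>. \<forall>y. Feps \<epsilon> (\<psi>e \<epsilon>) x y = per_ext \<psi>0 x y)
              \<and> (\<forall>x\<in>\<Omega>. \<forall>y. \<epsilon> *\<^sub>R Feps \<epsilon> (Ge \<epsilon>) x y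
                     = grad_y (per_ext \<psi>0) x y + \<epsilon> *\<^sub>R grad_x (per_ext \<psi>0) x y))
         \<and> strong_2s \<Omega> \<psi>e (per_ext \<psi>0)
         \<and> strong_2s_vec \<Omega> (\<lambda>\<epsilon> x y. \<epsilon> *\<^sub>R Ge \<epsilon> x y) (grad_y (per_ext \<psi>0))"
proof -
  define D where "D z = frechet_derivative (case_prod (per_ext \<psi>0)) (at z)" for z
  note P_deriv = per_ext_C1(1)[OF \<psi>0, folded D_def]
  define K where "K = fst ` tsupport \<psi>0"
  have K: "compact K"
    unfolding K_def using \<psi>0
    by (intro compact_continuous_image continuous_on_fst continuous_on_id) (simp add: test_fun_def)
  have P_zero: "per_ext \<psi>0 x y = 0" if "x \<notin> K" for x y
  proof (rule ccontr)
    assume "per_ext \<psi>0 x y \<noteq> 0"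
    then have "(x, \<chi> i. frac (y $ i)) \<in> tsupport \<psi>0"
      using not_in_tsupport_zero unfolding per_ext_def by blast
    then show False
      using that unfolding K_def by force
  qed
  define \<psi>e where "\<psi>e \<epsilon> x y = per_ext \<psi>0 x (y + (1 / \<epsilon>) *\<^sub>R x)" for \<epsilon> :: real and x y :: "real^'n"
  define Ge where "Ge \<epsilon> x y = (\<chi> i. D (x, y + (1 / \<epsilon>) *\<^sub>R x) (axis i 1, (1 / \<epsilon>) *\<^sub>R axis i 1))"
    for \<epsilon> :: real and x y :: "real^'n"
  have H1: "L2sharp \<Omega> (\<psi>e \<epsilon>) \<and> L2sharp_vec \<Omega> (Ge \<epsilon>) \<and> has_weak_grad_x \<Omega> (\<psi>e \<epsilon>) (Ge \<epsilon>)" for \<epsilon>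
    unfolding \<psi>e_def Ge_def
    by (rule sheared_periodic_L2sharp_H1[OF \<Omega> P_deriv per_ext_C1(2)[OF \<psi>0, folded D_def]
          periodic_y_per_ext K P_zero])
  have Feps_Ge: "\<epsilon> *\<^sub>R Feps \<epsilon> (Ge \<epsilon>) x y = grad_y (per_ext \<psi>0) x y + \<epsilon> *\<^sub>R grad_x (per_ext \<psi>0) x y"
    if "\<epsilon> > 0" for \<epsilon> x y
  proof -
    have lin: "linear (D (x, y))"
      using has_derivative_linear[OF P_deriv] .
    have split: "(axis i 1, (1 / \<epsilon>) *\<^sub>R axis i 1) = (axis i 1, 0) + (1 / \<epsilon>) *\<^sub>R (0, axis i 1)"
      for i :: 'n
      by simp
    have "D (x, y) (axis i 1, (1 / \<epsilon>) *\<^sub>R axis i 1)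
        = D (x, y) (axis i 1, 0) + (1 / \<epsilon>) * D (x, y) (0, axis i 1)" for i
      unfolding split linear_add[OF lin] linear_cmul[OF lin] by simp
    moreover have "grad_x (per_ext \<psi>0) x y $ i = D (x, y) (axis i 1, 0)"
      and "grad_y (per_ext \<psi>0) x y $ i = D (x, y) (0, axis i 1)" for i
      using frechet_derivative_partial_fst[OF P_deriv] frechet_derivative_partial_snd[OF P_deriv]
      by (simp_all add: grad_x_def grad_y_def grad_def)
    ultimately show ?thesis
      using that by (simp add: vec_eq_iff Feps_def Ge_def field_simps)
  qed
  show ?thesis
    unfolding strong_2s_vec_def
  proof (intro exI[of _ \<psi>e] exI[of _ Ge] conjI allI impI ballI)
    show "strong_2s \<Omega> \<psi>e (per_ext \<psi>0)"
      by (rule strong_2s_if_Feps_eq) (simp add: Feps_def \<psi>e_def)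
    show "strong_2s \<Omega> (\<lambda>\<epsilon> x y. (\<epsilon> *\<^sub>R Ge \<epsilon> x y) $ i) (\<lambda>x y. grad_y (per_ext \<psi>0) x y $ i)" for i
    proof (rule strong_2s_if_Feps_diff_scaled[where g="\<lambda>x y. grad_x (per_ext \<psi>0) x y $ i"])
      fix \<epsilon> :: real and x y :: "real^'n"
      assume "\<epsilon> > 0" "x \<in> \<Omega>"
      have "Feps \<epsilon> (\<lambda>x y. (\<epsilon> *\<^sub>R Ge \<epsilon> x y) $ i) x y = (\<epsilon> *\<^sub>R Feps \<epsilon> (Ge \<epsilon>) x y) $ i"
        by (simp add: Feps_def)
      then show "Feps \<epsilon> (\<lambda>x y. (\<epsilon> *\<^sub>R Ge \<epsilon> x y) $ i) x y - grad_y (per_ext \<psi>0) x y $ i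
          = \<epsilon> * grad_x (per_ext \<psi>0) x y $ i"
        using Feps_Ge[OF \<open>\<epsilon> > 0\<close>, of x y] by simp
    qed
  qed (use H1 Feps_Ge in \<open>auto simp: L2sharp_H1_def Feps_def \<psi>e_def\<close>)
qed

theorem mainTheorem5:
  fixes \<Omega> :: "(real^'n) set"
  assumes "open \<Omega>"
  shows "(\<forall>\<phi>. test_fun \<Omega> \<phi> \<longrightarrow>
           (\<exists>\<phi>e Ge.
              (\<forall>\<epsilon>>0. L2sharp_H1 \<Omega> (\<phi>e \<epsilon>) \<and> L2sharp_vec \<Omega> (Ge \<epsilon>)
                 \<and> has_weak_grad_x \<Omega> (\<phi>e \<epsilon>) (Ge \<epsilon>)
                 \<and> (\<forall>x\<in>\<Omega>. \<forall>y. Feps \<epsilon> (\<phi>e \<epsilon>) x y = \<phi> x)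
                 \<and> (\<forall>x\<in>\<Omega>. \<forall>y. Feps \<epsilon> (Ge \<epsilon>) x y = grad \<phi> x))
            \<and> strong_2s \<Omega> \<phi>e (\<lambda>x y. \<phi> x)
            \<and> strong_2s_vec \<Omega> Ge (\<lambda>x y. grad \<phi> x)))
       \<and> (\<forall>\<psi>0. test_fun (\<Omega> \<times> box 0 One) \<psi>0 \<longrightarrow>
           (\<exists>\<psi>e Ge.
              (\<forall>\<epsilon>>0. L2sharp_H1 \<Omega> (\<psi>e \<epsilon>) \<and> L2sharp_vec \<Omega> (Ge \<epsilon>)
                 \<and> has_weak_grad_x \<Omega> (\<psi>e \<epsilon>) (Ge \<epsilon>)
                 \<and> (\<forall>x\<in>\<Omega>. \<forall>y. Feps \<epsilon> (\<psi>e \<epsilon>) x y = per_ext \<psi>0 x y)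
                 \<and> (\<forall>x\<in>\<Omega>. \<forall>y. \<epsilon> *\<^sub>R Feps \<epsilon> (Ge \<epsilon>) x y
                        = grad_y (per_ext \<psi>0) x y + \<epsilon> *\<^sub>R grad_x (per_ext \<psi>0) x y))
            \<and> strong_2s \<Omega> \<psi>e (per_ext \<psi>0)
            \<and> strong_2s_vec \<Omega> (\<lambda>\<epsilon> x y. \<epsilon> *\<^sub>R Ge \<epsilon> x y) (grad_y (per_ext \<psi>0))))"
  by (intro conjI allI impI)
     (erule test_fun_two_scale_family[OF assms] periodic_test_fun_two_scale_family[OF assms])+

end
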